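(* Let $q\ge 2$ be even and let $C\subseteq B_q^4$ be a code with $\rho(C)>2$ (i.e. $C$ is capable of correcting single deletions). Then $|C|\le \dfrac{q^2(q+2)}{4}$.
   Context: $B_q=\{0,1,\dots,q-1\}$, $B_q^n$ is the set of words of length $n$ over $B_q$. The deletion–insertion distance $\rho(x,y)$ is the minimum number of deletions and insertions of letters needed to transform $x$ into $y$; for a code $C$ with $|C|\ge2$, $\rho(C)$ is the minimum of $\rho(x,y)$ over distinct $x,y\in C$. For a word $x$, $\lfloor x\rfloor_1$ is the set of words obtained from $x$ by deleting one letter. A code $C\subseteq B_q^n$ is capable of correcting single deletions if the sets $\lfloor x\rfloor_1$ ($x\in C$) are pairwise disjoint; this is equivalent to $\rho(C)>2$. *)

theory Defs
  imports Complex_Main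
begin

definition words :: "nat \<Rightarrow> nat \<Rightarrow> nat list set" where
  "words q n = {x. length x = n \<and> set x \<subseteq> {0..<q}}"

definition del1 :: "nat list \<Rightarrow> nat list set" where
  "del1 x = {take i x @ drop (Suc i) x | i. i < length x}"

definition single_deletion_correcting :: "nat list set \<Rightarrow> bool" where
  "single_deletion_correcting C \<longleftrightarrow>
     (\<forall>x\<in>C. \<forall>y\<in>C. x \<noteq> y \<longrightarrow> del1 x \<inter> del1 y = {})"

end

theory Submission imports Defs begin

(*
  A weighted sphere-packing argument for codes of length 4.

  Every word y of length 3 receives the weight 2^k, where k is the number of
  equal adjacent letter pairs of y; the total weight of all q^3 words is
  q (q + 1)^2.  For a codeword x of length 4 the weights of its single
  deletions sum to at least 4 + excess x, where the excess counts the
  palindromes [a,b,a] (a \<noteq> b) among the deletions of x, except for the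
  "special" words [a,b,c,a] with a, b, c distinct.  Since the deletion sets
  of the codewords are disjoint, 4 |C| plus the total excess is at most the
  weight of the covered words, which in turn is at most q (q + 1)^2 minus the
  number of uncovered palindromes.

  It remains to find q palindromes that are either uncovered or counted in
  some excess.  For a fixed outer letter a there are q - 1 palindromes
  [a,b,a]; a special codeword covers either none or exactly two of them, so
  when q is even at least one of them escapes the special codewords.  This
  gives 4 |C| + q \<le> q (q + 1)^2, i.e. |C| \<le> q^2 (q + 2) / 4.
*)

section \<open>Words and single deletions\<close>

lemma finite_words: "finite (words q n)"
proof -
  have "words q n = {xs. set xs \<subseteq> {0..<q} \<and> length xs = n}"
    unfolding words_def by auto
  thus ?thesis using finite_lists_length_eq[of "{0..<q}" n] by simp
qed

lemma del1_words: "x \<in> words q (Suc n) \<Longrightarrow> del1 x \<subseteq> words q n"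
  unfolding del1_def words_def
  by (auto dest!: in_set_takeD in_set_dropD)

lemma words_4_cases:
  "x \<in> words q 4 \<Longrightarrow> \<exists>a b c d. x = [a,b,c,d] \<and> a < q \<and> b < q \<and> c < q \<and> d < q"
  unfolding words_def by (auto simp: length_Suc_conv numeral_eq_Suc)

lemma del1_length_4: "del1 [a,b,c,d] = {[b,c,d],[a,c,d],[a,b,d],[a,b,c]}"
proof -
  have "{i::nat. i < 4} = {0,1,2,3}" by auto
  have "del1 [a,b,c,d] = (\<lambda>i. take i [a,b,c,d] @ drop (Suc i) [a,b,c,d]) ` {i. i < 4}"
    unfolding del1_def by auto
  also have "\<dots> = {[b,c,d],[a,c,d],[a,b,d],[a,b,c]}"
    using \<open>{i::nat. i < 4} = {0,1,2,3}\<close> by simp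
  finally show ?thesis .
qed

lemma sum_words_Suc:
  "sum f (words q (Suc n)) = (\<Sum>a<q. \<Sum>xs\<in>words q n. f (a # xs))"
proof -
  have words_Suc: "words q (Suc n) = (\<lambda>(a,xs). a # xs) ` ({..<q} \<times> words q n)"
    unfolding words_def by (auto simp: length_Suc_conv image_iff)
  have "inj_on (\<lambda>(a,xs). a # xs) ({..<q} \<times> words q n)"
    by (auto simp: inj_on_def)
  then have "sum f (words q (Suc n)) = sum (f \<circ> (\<lambda>(a,xs). a # xs)) ({..<q} \<times> words q n)"
    unfolding words_Suc by (rule sum.reindex)
  also have "\<dots> = (\<Sum>a<q. \<Sum>xs\<in>words q n. f (a # xs))"
    by (simp add: sum.cartesian_product split_def o_def)
  finally show ?thesis .
qed

lemma words_0: "words q 0 = {[]}"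
  unfolding words_def by auto

section \<open>The weight of a word of length 3\<close>

definition weight :: "nat list \<Rightarrow> nat" where
  "weight y = (if y!0 = y!1 then 2 else 1) * (if y!1 = y!2 then 2 else 1)"

lemma weight_ge_1: "1 \<le> weight y"
  unfolding weight_def by simp

lemma sum_double_diagonal: "(\<Sum>c<q. if b = c then 2 else 1::nat) = q + (if b < q then 1 else 0)"
  by (induction q) auto

lemma sum_weight_words: "sum weight (words q 3) = q * (q + 1)^2"
proof -
  have "sum weight (words q 3) = (\<Sum>a<q. \<Sum>b<q. \<Sum>c<q. weight [a,b,c])"
    by (simp add: numeral_eq_Suc sum_words_Suc words_0)
  also have "\<dots> = (\<Sum>a<q. \<Sum>b<q. (if a = b then 2 else 1) * (q + 1))"
    by (simp add: weight_def sum_distrib_left[symmetric] sum_double_diagonal)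
  also have "\<dots> = (\<Sum>a<q. (q + 1) * (q + 1))"
  proof (rule sum.cong)
    fix a assume "a \<in> {..<q}"
    then have "(\<Sum>b<q. if a = b then 2 else 1::nat) = q + 1"
      by (simp add: sum_double_diagonal)
    then show "(\<Sum>b<q. (if a = b then 2 else 1) * (q + 1)) = (q + 1) * (q + 1)"
      by (simp only: sum_distrib_right[symmetric])
  qed simp
  also have "\<dots> = q * (q + 1)^2"
    by (simp add: power2_eq_square)
  finally show ?thesis .
qed

text \<open>Since every word has weight at least 1, the words outside a set U can
  be counted against the weight that U leaves over.\<close>
lemma weight_plus_complement:
  assumes "U \<subseteq> words q 3"
  shows "sum weight U + card (words q 3 - U) \<le> sum weight (words q 3)"
proof -
  have "card (words q 3 - U) = (\<Sum>y\<in>words q 3 - U. 1)" by simp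
  also have "\<dots> \<le> sum weight (words q 3 - U)"
    by (rule sum_mono) (rule weight_ge_1)
  finally show ?thesis
    using sum.subset_diff[OF assms finite_words, of weight] by simp
qed

section \<open>Palindromes and special words\<close>

definition palindromes :: "nat list set" where
  "palindromes = {[a,b,a] | a b. a \<noteq> b}"

definition pal_at :: "nat \<Rightarrow> nat \<Rightarrow> nat list set" where
  "pal_at q a = {[a,b,a] | b. b < q \<and> b \<noteq> a}"

text \<open>Special words [a,b,c,a], a, b, c distinct: the only length-4 words whose
  deletions contain palindromes without the weight paying for them.\<close>
definition special :: "nat list \<Rightarrow> bool" where
  "special x \<longleftrightarrow> x!0 = x!3 \<and> distinct [x!0, x!1, x!2]"

definition excess :: "nat list \<Rightarrow> nat" where
  "excess x = (if special x then 0 else card (del1 x \<inter> palindromes))"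

lemma card_pal_at:
  assumes "a < q"
  shows "card (pal_at q a) = q - 1"
proof -
  have "pal_at q a = (\<lambda>b. [a,b,a]) ` ({..<q} - {a})"
    unfolding pal_at_def by auto
  moreover have "inj_on (\<lambda>b. [a,b,a]) ({..<q} - {a})"
    by (auto simp: inj_on_def)
  ultimately show ?thesis
    using assms by (simp add: card_image)
qed

lemma pal_at_subset: "pal_at q a \<subseteq> palindromes \<inter> words q 3" if "a < q"
  using that unfolding pal_at_def palindromes_def words_def by auto

lemma weight_del1_bound: "4 + excess [a,b,c,d] \<le> sum weight (del1 [a,b,c,d])"
  unfolding del1_length_4 excess_def special_def palindromes_def
  by (cases "a=b"; cases "a=c"; cases "a=d"; cases "b=c"; cases "b=d"; cases "c=d";
      simp add: weight_def card_insert_if)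

lemma special_word_covers_even:
  assumes "x \<in> words q 4" and "special x"
  shows "even (card (pal_at q a' \<inter> del1 x))"
proof -
  obtain a b c where x: "x = [a,b,c,a]" and "b < q" "c < q" "a \<noteq> b" "a \<noteq> c" "b \<noteq> c"
    using words_4_cases[OF assms(1)] assms(2) unfolding special_def by auto
  then have "pal_at q a' \<inter> del1 x = (if a' = a then {[a,b,a],[a,c,a]} else {})"
    unfolding x pal_at_def del1_length_4 by auto
  then show ?thesis
    using \<open>b \<noteq> c\<close> by simp
qed

section \<open>Counting for a single-deletion correcting code\<close>

context
  fixes q :: nat and C :: "nat list set"
  assumes code: "C \<subseteq> words q 4"
    and sdc: "single_deletion_correcting C"
begin

lemma finite_code: "finite C"
  using finite_subset[OF code finite_words] .

lemma finite_del1: "x \<in> C \<Longrightarrow> finite (del1 x)"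
  using finite_subset[OF del1_words finite_words] code by (auto simp: numeral_eq_Suc)

lemma disjoint_del1: "x \<in> C \<Longrightarrow> y \<in> C \<Longrightarrow> x \<noteq> y \<Longrightarrow> del1 x \<inter> del1 y = {}"
  using sdc unfolding single_deletion_correcting_def by blast

lemma covered_words: "\<Union> (del1 ` C) \<subseteq> words q 3"
  using code del1_words[of _ q 3] by (auto simp: numeral_eq_Suc)

lemma code_weight_bound:
  "4 * card C + (\<Sum>x\<in>C. excess x) \<le> sum weight (\<Union> (del1 ` C))"
proof -
  have "4 * card C + (\<Sum>x\<in>C. excess x) = (\<Sum>x\<in>C. 4 + excess x)"
    by (simp add: sum.distrib)
  also have "\<dots> \<le> (\<Sum>x\<in>C. sum weight (del1 x))"
  proof (rule sum_mono)
    fix x assume "x \<in> C"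
    then obtain a b c d where "x = [a,b,c,d]"
      using words_4_cases code by blast
    then show "4 + excess x \<le> sum weight (del1 x)"
      using weight_del1_bound by simp
  qed
  also have "\<dots> = sum weight (\<Union> (del1 ` C))"
    by (rule sum.UNION_disjoint[symmetric]) (use finite_code finite_del1 disjoint_del1 in auto)
  finally show ?thesis .
qed

lemma special_codewords_cover_even:
  "even (card (pal_at q a \<inter> \<Union> (del1 ` {x\<in>C. special x})))"
proof -
  let ?S = "{x\<in>C. special x}"
  have "card (pal_at q a \<inter> \<Union> (del1 ` ?S)) = card (\<Union>x\<in>?S. pal_at q a \<inter> del1 x)"
    by (simp only: Int_UN_distrib)
  also have "\<dots> = (\<Sum>x\<in>?S. card (pal_at q a \<inter> del1 x))"
    by (rule card_UN_disjoint) (use finite_code finite_del1 disjoint_del1 in auto)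
  finally show ?thesis
    using special_word_covers_even code by (auto intro!: dvd_sum)
qed

text \<open>For even q the number q - 1 is odd, so for every letter a some
  palindrome with outer letter a escapes the special codewords.\<close>
lemma palindrome_escapes_special:
  assumes "even q" and "a < q"
  shows "\<exists>y\<in>pal_at q a. y \<notin> \<Union> (del1 ` {x\<in>C. special x})"
proof (rule ccontr)
  assume "\<not> ?thesis"
  then have "pal_at q a \<inter> \<Union> (del1 ` {x\<in>C. special x}) = pal_at q a"
    by blast
  then have "even (q - 1)"
    using special_codewords_cover_even[of a] card_pal_at[OF assms(2)] by simp
  then show False
    using assms by presburger
qed

text \<open>Palindromes escaping the special codewords are either uncovered or
  counted in the excess of the non-special codeword covering them; there are
  at least q of them, one for every outer letter.\<close>
lemma uncovered_palindromes:
  assumes "even q"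
  shows "q \<le> card (palindromes \<inter> words q 3 - \<Union> (del1 ` C)) + (\<Sum>x\<in>C. excess x)"
proof -
  define escaping where
    "escaping = palindromes \<inter> words q 3 - \<Union> (del1 ` {x\<in>C. special x})"
  let ?counted = "\<Union>x\<in>C. if special x then {} else del1 x \<inter> palindromes"
  let ?uncovered = "palindromes \<inter> words q 3 - \<Union> (del1 ` C)"
  have "?uncovered \<union> ?counted \<subseteq> words q 3"
    using covered_words by auto
  then have "card escaping \<le> card (?uncovered \<union> ?counted)"
    by (intro card_mono) (auto simp: escaping_def intro: finite_subset[OF _ finite_words])
  also have "\<dots> \<le> card ?uncovered + card ?counted"
    by (rule card_Un_le)
  also have "card ?counted \<le> (\<Sum>x\<in>C. card (if special x then {} else del1 x \<inter> palindromes))"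
    by (rule card_UN_le[OF finite_code])
  also have "\<dots> = (\<Sum>x\<in>C. excess x)"
    by (rule sum.cong) (auto simp: excess_def)
  finally have escaping_bound:
    "card escaping \<le> card ?uncovered + (\<Sum>x\<in>C. excess x)"
    by simp
  have "{..<q} \<subseteq> hd ` escaping"
  proof
    fix a assume "a \<in> {..<q}"
    then obtain y where y: "y \<in> pal_at q a" "y \<notin> \<Union> (del1 ` {x\<in>C. special x})"
      using palindrome_escapes_special[OF assms] by blast
    have "y \<in> palindromes \<inter> words q 3"
      using y(1) pal_at_subset[of a q] \<open>a \<in> {..<q}\<close> by blast
    then have "y \<in> escaping"
      using y(2) unfolding escaping_def by blast
    moreover have "hd y = a"
      using y(1) unfolding pal_at_def by auto
    ultimately show "a \<in> hd ` escaping" by force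
  qed
  have finite_escaping: "finite escaping"
    unfolding escaping_def using finite_words by blast
  have "q = card {..<q}" by simp
  also have "\<dots> \<le> card (hd ` escaping)"
    using \<open>{..<q} \<subseteq> hd ` escaping\<close> finite_escaping by (intro card_mono) auto
  also have "\<dots> \<le> card escaping"
    using finite_escaping by (rule card_image_le)
  finally show ?thesis
    using escaping_bound by linarith
qed

end

theorem theorem2p1:
  fixes q :: nat and C :: "nat list set"
  assumes "q \<ge> 2" and "even q"
    and "C \<subseteq> words q 4"
    and "single_deletion_correcting C"
  shows "real (card C) \<le> real (q^2 * (q + 2)) / 4"
proof -
  let ?U = "\<Union> (del1 ` C)"
  have "card (palindromes \<inter> words q 3 - ?U) \<le> card (words q 3 - ?U)"
    by (rule card_mono) (auto simp: finite_words)
  then have "4 * card C + q \<le> sum weight ?U + card (words q 3 - ?U)"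
    using code_weight_bound[OF assms(3,4)] uncovered_palindromes[OF assms(3,4,2)] by linarith
  also have "\<dots> \<le> q * (q + 1)^2"
    using weight_plus_complement[OF covered_words[OF assms(3,4)]] sum_weight_words by simp
  finally have "4 * card C \<le> q^2 * (q + 2)"
    by (simp add: algebra_simps power2_eq_square)
  then have "real (4 * card C) \<le> real (q^2 * (q + 2))"
    by (rule of_nat_mono)
  then show ?thesis
    by simp
qed

end
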